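(* Let $\mathbb{K}$ be a field of characteristic $p>0$, let $S=\mathbb{K}[x_1,\ldots,x_n]$, and let $f\in S$ be a polynomial whose leading term $\mathrm{lt}_{\prec}(f)$ is a squarefree monomial for some monomial term order $\prec$. If $I\in\mathcal{C}_f$, then the initial ideal $\mathrm{lt}_{\prec}(I)$ is generated by squarefree monomials. (In particular every $I\in\mathcal{C}_f$ is radical.)
   Context: For $f\in S$, $\mathcal{C}_f$ denotes the smallest set of ideals of $S$ such that: (1) $(f)\in\mathcal{C}_f$; (2) if $I\in\mathcal{C}_f$ then $I:J\in\mathcal{C}_f$ for every ideal $J\subseteq S$; (3) if $I,J\in\mathcal{C}_f$ then $I+J\in\mathcal{C}_f$ and $I\cap J\in\mathcal{C}_f$. The initial ideal $\mathrm{lt}_{\prec}(I)$ is the ideal generated by the leading terms (w.r.t. $\prec$) of all elements of $I$. *)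

theory Defs
  imports Main "HOL-Library.Poly_Mapping"
begin

(* Polynomial ring S = K[x_i : i in a finite variable type] over a field K; polynomials are finitely supported maps from exponent vectors to coefficients. *)

type_synonym ('n, 'k) mpoly = "('n \<Rightarrow>\<^sub>0 nat) \<Rightarrow>\<^sub>0 'k"

definition is_ideal :: "'a::comm_ring_1 set \<Rightarrow> bool" where
  "is_ideal I \<longleftrightarrow> 0 \<in> I \<and> (\<forall>a\<in>I. \<forall>b\<in>I. a + b \<in> I) \<and> (\<forall>r. \<forall>a\<in>I. r * a \<in> I)"

definition ideal_gen :: "'a::comm_ring_1 set \<Rightarrow> 'a set" where
  "ideal_gen G = \<Inter>{I. is_ideal I \<and> G \<subseteq> I}"

definition ideal_colon :: "'a::comm_ring_1 set \<Rightarrow> 'a set \<Rightarrow> 'a set" where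
  "ideal_colon I J = {r. \<forall>j\<in>J. r * j \<in> I}"

definition is_radical :: "'a::comm_ring_1 set \<Rightarrow> bool" where
  "is_radical I \<longleftrightarrow> (\<forall>r k. r ^ k \<in> I \<longrightarrow> r \<in> I)"

inductive_set C_family :: "'a::comm_ring_1 \<Rightarrow> 'a set set" for f where
  principal: "ideal_gen {f} \<in> C_family f"
| colon: "I \<in> C_family f \<Longrightarrow> is_ideal J \<Longrightarrow> ideal_colon I J \<in> C_family f"
| sum: "I \<in> C_family f \<Longrightarrow> J \<in> C_family f \<Longrightarrow> {a + b | a b. a \<in> I \<and> b \<in> J} \<in> C_family f"
| inter: "I \<in> C_family f \<Longrightarrow> J \<in> C_family f \<Longrightarrow> I \<inter> J \<in> C_family f"

definition monomial_order :: "(('n \<Rightarrow>\<^sub>0 nat) \<Rightarrow> ('n \<Rightarrow>\<^sub>0 nat) \<Rightarrow> bool) \<Rightarrow> bool" where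
  "monomial_order le \<longleftrightarrow>
     (\<forall>a. le a a) \<and> (\<forall>a b. le a b \<and> le b a \<longrightarrow> a = b) \<and>
     (\<forall>a b c. le a b \<and> le b c \<longrightarrow> le a c) \<and> (\<forall>a b. le a b \<or> le b a) \<and>
     (\<forall>a. le 0 a) \<and> (\<forall>a b c. le a b \<longrightarrow> le (a + c) (b + c))"

definition lead_exp :: "(('n \<Rightarrow>\<^sub>0 nat) \<Rightarrow> ('n \<Rightarrow>\<^sub>0 nat) \<Rightarrow> bool) \<Rightarrow> ('n, 'k::zero) mpoly \<Rightarrow> ('n \<Rightarrow>\<^sub>0 nat)" where
  "lead_exp le f = (THE m. m \<in> Poly_Mapping.keys f \<and> (\<forall>m'\<in>Poly_Mapping.keys f. le m' m))"

definition lead_term :: "(('n \<Rightarrow>\<^sub>0 nat) \<Rightarrow> ('n \<Rightarrow>\<^sub>0 nat) \<Rightarrow> bool) \<Rightarrow> ('n, 'k::zero) mpoly \<Rightarrow> ('n, 'k) mpoly" where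
  "lead_term le f = (if f = 0 then 0 else Poly_Mapping.single (lead_exp le f) (Poly_Mapping.lookup f (lead_exp le f)))"

definition initial_ideal :: "(('n \<Rightarrow>\<^sub>0 nat) \<Rightarrow> ('n \<Rightarrow>\<^sub>0 nat) \<Rightarrow> bool) \<Rightarrow> ('n, 'k::comm_ring_1) mpoly set \<Rightarrow> ('n, 'k) mpoly set" where
  "initial_ideal le I = ideal_gen (lead_term le ` I)"

definition squarefree_exp :: "('n \<Rightarrow>\<^sub>0 nat) \<Rightarrow> bool" where
  "squarefree_exp m \<longleftrightarrow> (\<forall>i. Poly_Mapping.lookup m i \<le> 1)"

definition squarefree_monomial :: "('n, 'k::{zero,one}) mpoly \<Rightarrow> bool" where
  "squarefree_monomial u \<longleftrightarrow> (\<exists>m. squarefree_exp m \<and> u = Poly_Mapping.single m 1)"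

end

theory Submission
  imports Defs "HOL-Computational_Algebra.Primes" "HOL.Vector_Spaces"
begin

(* Let p = char K. Viewing K as a vector space over itself via a * c = a^p c, extending {1}
   to a basis gives an additive pi : K -> K with pi (c^p z) = c pi z and pi 1 = 1. The
   Frobenius trace Tr sends the monomial c x^((p-1)(1,...,1) + p e) to pi c x^e and kills every
   other monomial; it satisfies Tr (w^p y) = w Tr y. If g is a multiple of f with leading term
   x_1...x_n (possible because lt f is squarefree), then phi h = Tr (g^(p-1) h) is again
   p^-1-linear, phi 1 = 1, and phi maps (f) into itself, since g^(p-1) u f is f^p times a
   polynomial. Being an ideal mapped into itself by phi is preserved by colons, sums and
   intersections, so it holds for every I in C_f. Such an I is radical, as phi (s^p) = s.
   Moreover phi takes a monic polynomial with leading exponent p e to one with leading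
   exponent e, so the leading exponents of I are closed under division by p as well as under
   addition of arbitrary exponents; multiplying a leading exponent a up to p^N times its
   support and dividing by p N times shows that the support of a is again a leading exponent,
   so the initial ideal is generated by squarefree monomials. *)

lemma is_ideal_ideal_gen: "is_ideal (ideal_gen G)"
  unfolding ideal_gen_def is_ideal_def by blast

lemma ideal_gen_subset: "G \<subseteq> ideal_gen G"
  unfolding ideal_gen_def by blast

lemma ideal_gen_least: "is_ideal J \<Longrightarrow> G \<subseteq> J \<Longrightarrow> ideal_gen G \<subseteq> J"
  unfolding ideal_gen_def by blast

lemma ideal_mult_left: "is_ideal I \<Longrightarrow> a \<in> I \<Longrightarrow> r * a \<in> I"
  unfolding is_ideal_def by blast

lemma ideal_gen_singleton: "ideal_gen {f} = range (\<lambda>u. u * f)"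
proof
  have "is_ideal (range (\<lambda>u. u * f))"
    unfolding is_ideal_def
  proof (intro conjI ballI allI)
    show "0 \<in> range (\<lambda>u. u * f)" by (rule range_eqI[of _ _ 0]) simp
  next
    fix a b assume "a \<in> range (\<lambda>u. u * f)" "b \<in> range (\<lambda>u. u * f)"
    then obtain u v where "a = u * f" "b = v * f" by blast
    then show "a + b \<in> range (\<lambda>u. u * f)" by (intro range_eqI[of _ _ "u + v"]) (simp add: distrib_right)
  next
    fix r a assume "a \<in> range (\<lambda>u. u * f)"
    then obtain u where "a = u * f" by blast
    then show "r * a \<in> range (\<lambda>u. u * f)" by (intro range_eqI[of _ _ "r * u"]) (simp add: mult.assoc)
  qed
  then show "ideal_gen {f} \<subseteq> range (\<lambda>u. u * f)"
    by (rule ideal_gen_least) (simp add: range_eqI[of _ _ 1])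
  show "range (\<lambda>u. u * f) \<subseteq> ideal_gen {f}"
    using is_ideal_ideal_gen ideal_gen_subset ideal_mult_left by blast
qed

lemma is_ideal_colon: "is_ideal I \<Longrightarrow> is_ideal (ideal_colon I J)"
  unfolding is_ideal_def ideal_colon_def by (auto simp: algebra_simps)

lemma is_ideal_sum:
  assumes "is_ideal I" "is_ideal J"
  shows "is_ideal {a + b | a b. a \<in> I \<and> b \<in> J}"
  unfolding is_ideal_def
proof (intro conjI ballI allI)
  show "0 \<in> {a + b | a b. a \<in> I \<and> b \<in> J}"
    using assms unfolding is_ideal_def by force
next
  fix x y assume "x \<in> {a + b | a b. a \<in> I \<and> b \<in> J}" "y \<in> {a + b | a b. a \<in> I \<and> b \<in> J}"
  then obtain a b c d where "x = a + b" "y = c + d" "a \<in> I" "b \<in> J" "c \<in> I" "d \<in> J" by blast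
  moreover have "a + c \<in> I" "b + d \<in> J"
    using assms \<open>a \<in> I\<close> \<open>c \<in> I\<close> \<open>b \<in> J\<close> \<open>d \<in> J\<close> unfolding is_ideal_def by blast+
  moreover have "x + y = (a + c) + (b + d)"
    using \<open>x = a + b\<close> \<open>y = c + d\<close> by (simp add: ac_simps)
  ultimately show "x + y \<in> {a + b | a b. a \<in> I \<and> b \<in> J}" by blast
next
  fix r x assume "x \<in> {a + b | a b. a \<in> I \<and> b \<in> J}"
  then obtain a b where "x = a + b" "a \<in> I" "b \<in> J" by blast
  moreover have "r * a \<in> I" "r * b \<in> J"
    using assms \<open>a \<in> I\<close> \<open>b \<in> J\<close> unfolding is_ideal_def by blast+
  ultimately show "r * x \<in> {a + b | a b. a \<in> I \<and> b \<in> J}" by (auto simp: distrib_left)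
qed

lemma is_ideal_Int: "is_ideal I \<Longrightarrow> is_ideal J \<Longrightarrow> is_ideal (I \<inter> J)"
  unfolding is_ideal_def by auto

section \<open>\<open>p\<close>-inverse-linear maps and compatible ideals\<close>

definition p_inverse_linear :: "nat \<Rightarrow> ('a::comm_ring_1 \<Rightarrow> 'a) \<Rightarrow> bool" where
  "p_inverse_linear p \<phi> \<longleftrightarrow> (\<forall>a b. \<phi> (a + b) = \<phi> a + \<phi> b) \<and> (\<forall>w y. \<phi> (w ^ p * y) = w * \<phi> y)"

lemma p_inverse_linear_zero: "p_inverse_linear p \<phi> \<Longrightarrow> \<phi> 0 = 0"
  unfolding p_inverse_linear_def by (metis add_cancel_right_right add_0)

definition compatible_ideal :: "('a::comm_ring_1 \<Rightarrow> 'a) \<Rightarrow> 'a set \<Rightarrow> bool" where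
  "compatible_ideal \<phi> I \<longleftrightarrow> is_ideal I \<and> \<phi> ` I \<subseteq> I"

lemma p_inverse_linear_mult_left:
  "p_inverse_linear p \<phi> \<Longrightarrow> p_inverse_linear p (\<lambda>h. \<phi> (y * h))"
  unfolding p_inverse_linear_def by (metis distrib_left mult.left_commute)

lemma p_inverse_linear_mult_left_principal:
  assumes "p_inverse_linear p \<phi>" "0 < p" "f ^ (p - 1) dvd y"
  shows "(\<lambda>h. \<phi> (y * h)) ` ideal_gen {f} \<subseteq> ideal_gen {f}"
proof (clarsimp simp: ideal_gen_singleton)
  fix u
  obtain z where "y = f ^ (p - 1) * z" using assms(3) by blast
  then have "y * (u * f) = f ^ p * (z * u)"
    using \<open>0 < p\<close> by (simp add: ac_simps power_eq_if)
  then have "\<phi> (y * (u * f)) = \<phi> (z * u) * f"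
    using assms(1) by (simp add: p_inverse_linear_def mult.commute)
  then show "\<phi> (y * (u * f)) \<in> range (\<lambda>u. u * f)" by blast
qed

lemma C_family_compatible:
  assumes lin: "p_inverse_linear p \<phi>" and "0 < p"
    and principal: "\<phi> ` ideal_gen {f} \<subseteq> ideal_gen {f}"
    and "I \<in> C_family f"
  shows "compatible_ideal \<phi> I"
  using \<open>I \<in> C_family f\<close>
proof induction
  case principal
  then show ?case
    using assms(3) is_ideal_ideal_gen by (auto simp: compatible_ideal_def)
next
  case (colon I J)
  then have I: "is_ideal I" "\<phi> ` I \<subseteq> I" by (simp_all add: compatible_ideal_def)
  have "\<phi> r * j \<in> I" if "r \<in> ideal_colon I J" "j \<in> J" for r j
  proof -
    have "r * j \<in> I" using that by (simp add: ideal_colon_def)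
    then have "j ^ (p - 1) * (r * j) \<in> I" using I(1) ideal_mult_left by blast
    moreover have "j ^ (p - 1) * (r * j) = j ^ p * r"
      using \<open>0 < p\<close> by (simp add: ac_simps power_eq_if)
    ultimately have "\<phi> (j ^ p * r) \<in> I" using I(2) by auto
    with lin show ?thesis by (simp add: p_inverse_linear_def mult.commute)
  qed
  then show ?case
    using is_ideal_colon[OF I(1)] by (auto simp: compatible_ideal_def ideal_colon_def)
next
  case (sum I J)
  then have "is_ideal I" "\<phi> ` I \<subseteq> I" "is_ideal J" "\<phi> ` J \<subseteq> J"
    by (simp_all add: compatible_ideal_def)
  with lin show ?case
    using is_ideal_sum by (fastforce simp: compatible_ideal_def p_inverse_linear_def)
next
  case (inter I J)
  then show ?case by (auto simp: compatible_ideal_def is_ideal_Int)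
qed

lemma compatible_ideal_radical:
  assumes lin: "p_inverse_linear p \<phi>" and "\<phi> 1 = 1" "1 < p"
    and compat: "compatible_ideal \<phi> I"
  shows "is_radical I"
  unfolding is_radical_def
proof (intro allI impI)
  fix r :: 'a and k assume "r ^ k \<in> I"
  have root: "s \<in> I" if "s ^ p \<in> I" for s
  proof -
    have "\<phi> (s ^ p * 1) = s"
      using lin \<open>\<phi> 1 = 1\<close> unfolding p_inverse_linear_def by (metis mult_1_right)
    with that compat show ?thesis by (force simp: compatible_ideal_def)
  qed
  have descend: "r \<in> I" if "r ^ (p ^ j) \<in> I" for j
    using that
  proof (induction j)
    case (Suc j)
    then have "(r ^ p ^ j) ^ p \<in> I" by (simp add: mult.commute flip: power_mult)
    then show ?case using root Suc.IH by blast
  qed simp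
  have "k \<le> p ^ k"
    using \<open>1 < p\<close> less_exp[of k] power_mono[of 2 p k] by linarith
  then have "r ^ (p ^ k) = r ^ (p ^ k - k) * r ^ k"
    by (simp flip: power_add)
  then have "r ^ (p ^ k) \<in> I"
    using \<open>r ^ k \<in> I\<close> compat ideal_mult_left by (auto simp: compatible_ideal_def)
  then show "r \<in> I" by (rule descend)
qed

lemma ex_p_inverse_linear_one:
  assumes "prime CHAR('k::field)"
  shows "\<exists>\<pi>::'k \<Rightarrow> 'k. p_inverse_linear CHAR('k) \<pi> \<and> \<pi> 1 = 1"
proof -
  interpret frob: vector_space "\<lambda>a (c::'k). a ^ CHAR('k) * c"
    by unfold_locales (auto simp: algebra_simps freshmans_dream[OF assms] power_mult_distrib)
  interpret vector_space_pair "\<lambda>a (c::'k). a ^ CHAR('k) * c" "(*) :: 'k \<Rightarrow> 'k \<Rightarrow> 'k"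
    by unfold_locales (auto simp: algebra_simps)
  have "frob.independent {1}" by simp
  from linear_independent_extend[OF this, of "\<lambda>_. 1"]
  obtain \<pi> where "Vector_Spaces.linear (\<lambda>a (c::'k). a ^ CHAR('k) * c) (*) \<pi>" "\<pi> 1 = 1"
    by auto
  then show ?thesis
    unfolding p_inverse_linear_def by (metis linear_add linear_scale)
qed

section \<open>Exponent vectors and monomials\<close>

definition smult_exp :: "nat \<Rightarrow> ('n \<Rightarrow>\<^sub>0 nat) \<Rightarrow> ('n \<Rightarrow>\<^sub>0 nat)" where
  "smult_exp k a = Poly_Mapping.map ((*) k) a"

lemma lookup_smult_exp [simp]: "Poly_Mapping.lookup (smult_exp k a) i = k * Poly_Mapping.lookup a i"
  by (simp add: smult_exp_def map.rep_eq when_def)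

lemma smult_exp_0 [simp]: "smult_exp 0 a = 0"
  by (intro poly_mapping_eqI) simp

lemma smult_exp_zero_right [simp]: "smult_exp k 0 = 0"
  by (intro poly_mapping_eqI) simp

lemma smult_exp_Suc: "smult_exp (Suc k) a = a + smult_exp k a"
  by (intro poly_mapping_eqI) (simp add: lookup_add)

definition sqfree_part :: "('n \<Rightarrow>\<^sub>0 nat) \<Rightarrow> ('n \<Rightarrow>\<^sub>0 nat)" where
  "sqfree_part a = Poly_Mapping.map (min 1) a"

lemma lookup_sqfree_part [simp]: "Poly_Mapping.lookup (sqfree_part a) i = min 1 (Poly_Mapping.lookup a i)"
  by (simp add: sqfree_part_def map.rep_eq when_def)

lemma squarefree_exp_sqfree_part: "squarefree_exp (sqfree_part a)"
  by (simp add: squarefree_exp_def)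

lemma diff_sqfree_part_add: "(a - sqfree_part a) + sqfree_part a = a"
  by (rule poly_mapping_eqI) (simp add: lookup_add lookup_minus)

definition ones :: "'n::finite \<Rightarrow>\<^sub>0 nat" where
  "ones = Abs_poly_mapping (\<lambda>_. 1)"

lemma lookup_ones [simp]: "Poly_Mapping.lookup ones i = 1"
  by (simp add: ones_def Abs_poly_mapping_inverse)

lemma sqfree_part_mem:
  fixes L :: "('n \<Rightarrow>\<^sub>0 nat) set"
  assumes "1 < p"
    and up: "\<And>a d. a \<in> L \<Longrightarrow> d + a \<in> L"
    and down: "\<And>e. smult_exp p e \<in> L \<Longrightarrow> e \<in> L"
    and "a \<in> L"
  shows "sqfree_part a \<in> L"
proof -
  define N where "N = sum (Poly_Mapping.lookup a) (Poly_Mapping.keys a)"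
  have "Poly_Mapping.lookup a i \<le> p ^ N" for i
  proof -
    have "Poly_Mapping.lookup a i \<le> N"
      unfolding N_def by (cases "i \<in> Poly_Mapping.keys a") (simp_all add: member_le_sum in_keys_iff)
    also have "N \<le> p ^ N"
      using \<open>1 < p\<close> less_exp[of N] power_mono[of 2 p N] by linarith
    finally show ?thesis .
  qed
  then have "(smult_exp (p ^ N) (sqfree_part a) - a) + a = smult_exp (p ^ N) (sqfree_part a)"
    by (intro poly_mapping_eqI) (simp add: lookup_add lookup_minus min_def)
  then have "smult_exp (p ^ N) (sqfree_part a) \<in> L"
    using up[OF \<open>a \<in> L\<close>] by metis
  moreover have "smult_exp (p ^ j) e \<in> L \<Longrightarrow> e \<in> L" for j e
  proof (induction j)
    case 0
    have "smult_exp 1 e = e" by (intro poly_mapping_eqI) simp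
    with 0 show ?case by simp
  next
    case (Suc j)
    have "smult_exp (p ^ Suc j) e = smult_exp p (smult_exp (p ^ j) e)"
      by (intro poly_mapping_eqI) simp
    then show ?case using Suc down by metis
  qed
  ultimately show ?thesis by blast
qed

lemma single_eq_zero_iff [simp]: "Poly_Mapping.single k c = 0 \<longleftrightarrow> c = 0"
  by (metis lookup_single_eq lookup_zero single_zero)

lemma single_power: "Poly_Mapping.single a c ^ n = Poly_Mapping.single (smult_exp n a) (c ^ n)"
  by (induction n) (simp_all add: mult_single smult_exp_Suc)

lemma lookup_single_mult_add:
  fixes y :: "'a::cancel_comm_monoid_add \<Rightarrow>\<^sub>0 'k::comm_semiring_1"
  shows "Poly_Mapping.lookup (Poly_Mapping.single k c * y) (k + q) = c * Poly_Mapping.lookup y q"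
proof -
  have "(\<Sum>q'. Poly_Mapping.lookup y q' when k + q = k + q') = Poly_Mapping.lookup y q"
    by (simp add: Sum_any_when_equal')
  then show ?thesis
    by (simp add: lookup_mult lookup_single when_mult Sum_any_when_equal)
qed

lemma lookup_single_mult_not_dvd:
  fixes y :: "'a::cancel_comm_monoid_add \<Rightarrow>\<^sub>0 'k::comm_semiring_1"
  assumes "\<And>q. x \<noteq> k + q"
  shows "Poly_Mapping.lookup (Poly_Mapping.single k c * y) x = 0"
proof -
  have "(\<Sum>q. Poly_Mapping.lookup y q when x = k + q) = 0"
    using assms by simp
  then show ?thesis
    by (simp add: lookup_mult lookup_single when_mult Sum_any_when_equal)
qed

lemma poly_mapping_sum_single:
  "w = (\<Sum>a\<in>Poly_Mapping.keys w. Poly_Mapping.single a (Poly_Mapping.lookup w a))"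
proof (rule poly_mapping_eqI)
  fix x
  show "Poly_Mapping.lookup w x
      = Poly_Mapping.lookup (\<Sum>a\<in>Poly_Mapping.keys w. Poly_Mapping.single a (Poly_Mapping.lookup w a)) x"
    by (simp add: lookup_sum lookup_single when_def in_keys_iff sum.If_cases[of _ "\<lambda>a. a = x"] Int_def)
qed

lemma CHAR_mpoly: "CHAR(('n, 'k::comm_semiring_1) mpoly) = CHAR('k)"
proof (rule CHAR_eqI)
  show "of_nat CHAR('k) = (0 :: ('n, 'k) mpoly)"
    by (metis of_nat_CHAR single_of_nat single_zero)
next
  fix x assume "of_nat x = (0 :: ('n, 'k) mpoly)"
  then have "Poly_Mapping.lookup (of_nat x :: ('n, 'k) mpoly) 0 = 0" by simp
  then show "CHAR('k) dvd x" by (simp add: lookup_of_nat of_nat_eq_0_iff_char_dvd)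
qed

section \<open>Leading terms\<close>

definition lead_coeff :: "(('n \<Rightarrow>\<^sub>0 nat) \<Rightarrow> ('n \<Rightarrow>\<^sub>0 nat) \<Rightarrow> bool) \<Rightarrow> ('n, 'k::zero) mpoly \<Rightarrow> 'k" where
  "lead_coeff le h = Poly_Mapping.lookup h (lead_exp le h)"

lemma lead_coeff_zero [simp]: "lead_coeff le 0 = 0"
  by (simp add: lead_coeff_def)

lemma lead_term_eq_single: "lead_term le h = Poly_Mapping.single (lead_exp le h) (lead_coeff le h)"
  by (simp add: lead_term_def lead_coeff_def)

locale monomial_ordering =
  fixes le :: "('n \<Rightarrow>\<^sub>0 nat) \<Rightarrow> ('n \<Rightarrow>\<^sub>0 nat) \<Rightarrow> bool"
  assumes monomial_order: "monomial_order le"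
begin

lemma ord_refl: "le a a"
  and ord_antisym: "le a b \<Longrightarrow> le b a \<Longrightarrow> a = b"
  and ord_trans: "le a b \<Longrightarrow> le b c \<Longrightarrow> le a c"
  and ord_total: "le a b \<or> le b a"
  and ord_zero_least: "le 0 a"
  and ord_add_right: "le a b \<Longrightarrow> le (a + c) (b + c)"
  using monomial_order unfolding monomial_order_def by blast+

lemma ord_add_left: "le a b \<Longrightarrow> le (c + a) (c + b)"
  using ord_add_right[of a b c] by (simp add: add.commute)

lemma ord_add_mono: "le a A \<Longrightarrow> le b B \<Longrightarrow> le (a + b) (A + B)"
  using ord_add_right ord_add_left ord_trans by blast

lemma ord_add_eq_add_cancel:
  assumes "le a A" "le b B" "a + b = A + B"
  shows "a = A"
proof -
  have "le (a + b) (A + b)" "le (A + b) (A + B)"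
    using ord_add_right[OF assms(1)] ord_add_left[OF assms(2)] .
  then have "A + b = A + B" using assms(3) ord_antisym by metis
  then show ?thesis using assms(3) by simp
qed

lemma ord_smult_exp_mono: "le a b \<Longrightarrow> le (smult_exp k a) (smult_exp k b)"
  by (induction k) (simp_all add: ord_refl ord_add_mono smult_exp_Suc)

lemma ex_greatest: "finite A \<Longrightarrow> A \<noteq> {} \<Longrightarrow> \<exists>m\<in>A. \<forall>a\<in>A. le a m"
proof (induction A rule: finite_ne_induct)
  case (insert x A)
  then obtain m where "m \<in> A" "\<forall>a\<in>A. le a m" by blast
  then show ?case using ord_total ord_refl ord_trans by (metis insert_iff)
qed (use ord_refl in blast)

lemma lead_exp_eqI:
  assumes "m \<in> Poly_Mapping.keys h" "\<And>m'. m' \<in> Poly_Mapping.keys h \<Longrightarrow> le m' m"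
  shows "lead_exp le h = m"
  unfolding lead_exp_def using assms ord_antisym by (intro the_equality) blast+

lemma lead_exp_greatest:
  assumes "h \<noteq> 0"
  shows "lead_exp le h \<in> Poly_Mapping.keys h" "m \<in> Poly_Mapping.keys h \<Longrightarrow> le m (lead_exp le h)"
proof -
  obtain x where "x \<in> Poly_Mapping.keys h" "\<forall>m\<in>Poly_Mapping.keys h. le m x"
    using ex_greatest[of "Poly_Mapping.keys h"] assms by auto
  moreover from this have "lead_exp le h = x" by (intro lead_exp_eqI) auto
  ultimately show "lead_exp le h \<in> Poly_Mapping.keys h" "m \<in> Poly_Mapping.keys h \<Longrightarrow> le m (lead_exp le h)"
    by auto
qed

lemma lead_coeff_eq_zero_iff [simp]: "lead_coeff le h = 0 \<longleftrightarrow> h = 0"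
  using lead_exp_greatest(1) by (auto simp: lead_coeff_def in_keys_iff)

lemma lead_exp_single: "c \<noteq> 0 \<Longrightarrow> lead_exp le (Poly_Mapping.single a c) = a"
  by (rule lead_exp_eqI) (simp_all add: ord_refl)

lemma lead_coeff_single: "c \<noteq> 0 \<Longrightarrow> lead_coeff le (Poly_Mapping.single a c) = c"
  by (simp add: lead_coeff_def lead_exp_single)

lemma lead_exp_one [simp]: "lead_exp le (1 :: ('n, 'k::zero_neq_one) mpoly) = 0"
  using lead_exp_single[of "1::'k" 0] by simp

lemma lead_coeff_one [simp]: "lead_coeff le (1 :: ('n, 'k::zero_neq_one) mpoly) = 1"
  by (simp add: lead_coeff_def)

lemma lookup_mult_lead_exp:
  fixes u v :: "('n, 'k::comm_semiring_1) mpoly"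
  assumes "u \<noteq> 0" "v \<noteq> 0"
  shows "Poly_Mapping.lookup (u * v) (lead_exp le u + lead_exp le v) = lead_coeff le u * lead_coeff le v"
proof -
  let ?A = "lead_exp le u" and ?B = "lead_exp le v"
  have "Poly_Mapping.lookup u l * (\<Sum>q. Poly_Mapping.lookup v q when ?A + ?B = l + q)
      = (lead_coeff le u * lead_coeff le v when l = ?A)" for l
  proof (cases "l = ?A")
    case True
    then show ?thesis by (simp add: lead_coeff_def Sum_any_when_equal')
  next
    case False
    have "(Poly_Mapping.lookup v q when ?A + ?B = l + q) = 0" if "l \<in> Poly_Mapping.keys u" for q
    proof (cases "q \<in> Poly_Mapping.keys v")
      case True
      then have "?A + ?B \<noteq> l + q"
        using that False ord_add_eq_add_cancel lead_exp_greatest(2) assms by metis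
      then show ?thesis by simp
    qed (simp add: in_keys_iff)
    then show ?thesis using False by (cases "l \<in> Poly_Mapping.keys u") (simp_all add: in_keys_iff)
  qed
  then show ?thesis by (simp add: lookup_mult Sum_any_when_equal)
qed

lemma lead_coeff_mult:
  fixes u v :: "('n, 'k::idom) mpoly"
  assumes "u \<noteq> 0" "v \<noteq> 0"
  shows "lead_coeff le (u * v) = lead_coeff le u * lead_coeff le v"
    and "lead_exp le (u * v) = lead_exp le u + lead_exp le v"
proof -
  let ?A = "lead_exp le u" and ?B = "lead_exp le v"
  have "?A + ?B \<in> Poly_Mapping.keys (u * v)"
    using lookup_mult_lead_exp[OF assms] assms by (simp add: in_keys_iff)
  moreover have "le m (?A + ?B)" if m: "m \<in> Poly_Mapping.keys (u * v)" for m
  proof -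
    obtain a b where "m = a + b" "a \<in> Poly_Mapping.keys u" "b \<in> Poly_Mapping.keys v"
      using m keys_mult[of u v] by blast
    then show ?thesis using ord_add_mono lead_exp_greatest(2) assms by blast
  qed
  ultimately show lead: "lead_exp le (u * v) = ?A + ?B" by (rule lead_exp_eqI)
  show "lead_coeff le (u * v) = lead_coeff le u * lead_coeff le v"
    using lookup_mult_lead_exp[OF assms] by (simp only: lead_coeff_def[of le "u * v"] lead)
qed

lemma mult_neq_zero:
  fixes u v :: "('n, 'k::idom) mpoly"
  shows "u \<noteq> 0 \<Longrightarrow> v \<noteq> 0 \<Longrightarrow> u * v \<noteq> 0"
  using lead_coeff_mult(1) lead_coeff_eq_zero_iff by fastforce

lemma lead_coeff_power:
  fixes u :: "('n, 'k::idom) mpoly"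
  assumes "u \<noteq> 0"
  shows "lead_coeff le (u ^ n) = lead_coeff le u ^ n"
    and "lead_exp le (u ^ n) = smult_exp n (lead_exp le u)"
proof -
  have pow: "u ^ n \<noteq> 0" for n
    using assms by (induction n) (simp_all add: mult_neq_zero)
  show "lead_coeff le (u ^ n) = lead_coeff le u ^ n"
    by (induction n) (simp_all add: lead_coeff_mult assms pow)
  show "lead_exp le (u ^ n) = smult_exp n (lead_exp le u)"
    by (induction n) (simp_all add: lead_coeff_mult assms pow smult_exp_Suc)
qed

lemma monic_lead_exp_zero:
  assumes "lead_coeff le h = 1" "lead_exp le h = 0"
  shows "h = 1"
proof (rule poly_mapping_eqI)
  fix x
  have "h \<noteq> 0" using assms(1) by auto
  have "x \<notin> Poly_Mapping.keys h" if "x \<noteq> 0"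
    using that lead_exp_greatest(2)[OF \<open>h \<noteq> 0\<close>] assms(2) ord_zero_least ord_antisym by metis
  then show "Poly_Mapping.lookup h x = Poly_Mapping.lookup 1 x"
    using assms by (cases "x = 0") (simp_all add: lookup_one lead_coeff_def in_keys_iff)
qed

lemma initial_ideal_squarefree_generated:
  fixes I :: "('n, 'k::field) mpoly set"
  assumes sqfree: "\<And>h. h \<in> I \<Longrightarrow> h \<noteq> 0 \<Longrightarrow> \<exists>h'\<in>I. h' \<noteq> 0 \<and> lead_exp le h' = sqfree_part (lead_exp le h)"
  shows "\<exists>G. (\<forall>g\<in>G. squarefree_monomial g) \<and> initial_ideal le I = ideal_gen G"
proof -
  define G where "G = {Poly_Mapping.single (lead_exp le h) (1::'k) | h. h \<in> I \<and> h \<noteq> 0 \<and> squarefree_exp (lead_exp le h)}"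
  have "lead_term le h \<in> ideal_gen G" if h: "h \<in> I" for h
  proof (cases "h = 0")
    case True
    then show ?thesis using is_ideal_ideal_gen[of G] by (simp add: lead_term_def is_ideal_def)
  next
    case False
    let ?a = "lead_exp le h"
    obtain h' where "h' \<in> I" "h' \<noteq> 0" "lead_exp le h' = sqfree_part ?a"
      using sqfree h False by blast
    then have "Poly_Mapping.single (sqfree_part ?a) 1 \<in> G"
      unfolding G_def using squarefree_exp_sqfree_part[of ?a] by (intro CollectI exI[of _ h']) simp
    then have "Poly_Mapping.single (sqfree_part ?a) 1 \<in> ideal_gen G"
      using ideal_gen_subset by blast
    then have "Poly_Mapping.single (?a - sqfree_part ?a) (lead_coeff le h) * Poly_Mapping.single (sqfree_part ?a) 1
        \<in> ideal_gen G"
      using is_ideal_ideal_gen ideal_mult_left by blast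
    then show ?thesis by (simp add: lead_term_eq_single mult_single diff_sqfree_part_add)
  qed
  then have "initial_ideal le I \<subseteq> ideal_gen G"
    unfolding initial_ideal_def by (intro ideal_gen_least is_ideal_ideal_gen) blast
  moreover have "G \<subseteq> initial_ideal le I"
  proof
    fix x assume "x \<in> G"
    then obtain h where h: "h \<in> I" "h \<noteq> 0" "x = Poly_Mapping.single (lead_exp le h) 1"
      unfolding G_def by blast
    then have "Poly_Mapping.single 0 (1 / lead_coeff le h) * lead_term le h \<in> initial_ideal le I"
      unfolding initial_ideal_def using ideal_gen_subset is_ideal_ideal_gen ideal_mult_left by blast
    then show "x \<in> initial_ideal le I" using h by (simp add: lead_term_eq_single mult_single)
  qed
  then have "ideal_gen G \<subseteq> initial_ideal le I"
    unfolding initial_ideal_def by (intro ideal_gen_least is_ideal_ideal_gen)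
  moreover have "\<forall>g\<in>G. squarefree_monomial g"
    unfolding G_def squarefree_monomial_def by blast
  ultimately show ?thesis by blast
qed

end

lemma ex_monic_multiple_lead_ones:
  fixes f :: "('n::finite, 'k::field) mpoly"
  assumes "monomial_order le" "f \<noteq> 0" "squarefree_exp (lead_exp le f)"
  shows "\<exists>g. f dvd g \<and> lead_coeff le g = 1 \<and> lead_exp le g = ones"
proof -
  interpret monomial_ordering le using assms(1) by (rule monomial_ordering.intro)
  define c where "c = 1 / lead_coeff le f"
  define g where "g = Poly_Mapping.single (ones - lead_exp le f) c * f"
  have "c \<noteq> 0" using assms(2) by (simp add: c_def)
  moreover have "(ones - lead_exp le f) + lead_exp le f = ones"
    using assms(3) by (intro poly_mapping_eqI) (simp add: squarefree_exp_def lookup_add lookup_minus)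
  ultimately have "lead_coeff le g = 1" "lead_exp le g = ones"
    using assms(2) by (simp_all add: g_def lead_coeff_mult lead_coeff_single lead_exp_single c_def)
  then show ?thesis by (intro exI[of _ g]) (simp add: g_def)
qed

section \<open>The Frobenius trace\<close>

definition trace_exp :: "nat \<Rightarrow> ('n::finite \<Rightarrow>\<^sub>0 nat) \<Rightarrow> ('n \<Rightarrow>\<^sub>0 nat)" where
  "trace_exp p e = smult_exp (p - 1) ones + smult_exp p e"

lemma lookup_trace_exp [simp]: "Poly_Mapping.lookup (trace_exp p e) i = (p - 1) + p * Poly_Mapping.lookup e i"
  by (simp add: trace_exp_def lookup_add)

lemma inj_trace_exp:
  assumes "0 < p"
  shows "inj (trace_exp p)"
proof (rule injI, rule poly_mapping_eqI)
  fix a b i assume "trace_exp p a = trace_exp p b"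
  then have "(p - 1) + p * Poly_Mapping.lookup a i = (p - 1) + p * Poly_Mapping.lookup b i"
    by (metis lookup_trace_exp)
  then have "p * Poly_Mapping.lookup a i = p * Poly_Mapping.lookup b i" by linarith
  with \<open>0 < p\<close> show "Poly_Mapping.lookup a i = Poly_Mapping.lookup b i" by simp
qed

lemma trace_exp_add: "trace_exp p (a + e) = smult_exp p a + trace_exp p e"
  by (rule poly_mapping_eqI) (simp add: lookup_add algebra_simps)

lemma trace_exp_eq_add_imp_dvd:
  assumes "0 < p" "trace_exp p e = smult_exp p a + q"
  shows "e = a + (e - a)"
proof (rule poly_mapping_eqI)
  fix i
  have "p * Poly_Mapping.lookup a i < p * Suc (Poly_Mapping.lookup e i)"
    using arg_cong[OF assms(2), of "\<lambda>x. Poly_Mapping.lookup x i"] \<open>0 < p\<close>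
    by (simp add: lookup_add)
  then have "Poly_Mapping.lookup a i \<le> Poly_Mapping.lookup e i"
    by (metis less_Suc_eq_le mult_less_cancel1)
  then show "Poly_Mapping.lookup e i = Poly_Mapping.lookup (a + (e - a)) i"
    by (simp add: lookup_add lookup_minus)
qed

definition frob_trace :: "nat \<Rightarrow> ('k::zero \<Rightarrow> 'k) \<Rightarrow> ('n::finite, 'k) mpoly \<Rightarrow> ('n, 'k) mpoly" where
  "frob_trace p \<pi> h = Abs_poly_mapping (\<lambda>e. \<pi> (Poly_Mapping.lookup h (trace_exp p e)))"

lemma lookup_frob_trace:
  assumes "0 < p" "\<pi> 0 = 0"
  shows "Poly_Mapping.lookup (frob_trace p \<pi> h) e = \<pi> (Poly_Mapping.lookup h (trace_exp p e))"
proof -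
  have "{e. \<pi> (Poly_Mapping.lookup h (trace_exp p e)) \<noteq> 0} \<subseteq> trace_exp p -` Poly_Mapping.keys h"
    using assms(2) by (auto simp: in_keys_iff)
  moreover have "finite (trace_exp p -` Poly_Mapping.keys h)"
    using inj_trace_exp[OF assms(1)] by (intro finite_vimageI) auto
  ultimately show ?thesis
    unfolding frob_trace_def by (subst Abs_poly_mapping_inverse) (auto intro: finite_subset)
qed

lemma frob_trace_add:
  assumes "0 < p" "p_inverse_linear p \<pi>"
  shows "frob_trace p \<pi> (a + b) = frob_trace p \<pi> a + frob_trace p \<pi> b"
  using assms p_inverse_linear_zero[OF assms(2)]
  by (intro poly_mapping_eqI) (simp add: lookup_frob_trace lookup_add p_inverse_linear_def)

lemma frob_trace_zero: "0 < p \<Longrightarrow> \<pi> 0 = 0 \<Longrightarrow> frob_trace p \<pi> 0 = 0"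
  by (intro poly_mapping_eqI) (simp add: lookup_frob_trace)

lemma frob_trace_single_mult:
  assumes "0 < p" and lin: "p_inverse_linear p \<pi>"
  shows "frob_trace p \<pi> (Poly_Mapping.single (smult_exp p a) (c ^ p) * y)
    = Poly_Mapping.single a c * frob_trace p \<pi> y"
proof (rule poly_mapping_eqI)
  fix e
  note lookup_tr = lookup_frob_trace[of p \<pi>, OF \<open>0 < p\<close> p_inverse_linear_zero[OF lin]]
  show "Poly_Mapping.lookup (frob_trace p \<pi> (Poly_Mapping.single (smult_exp p a) (c ^ p) * y)) e
      = Poly_Mapping.lookup (Poly_Mapping.single a c * frob_trace p \<pi> y) e"
  proof (cases "\<exists>e'. e = a + e'")
    case True
    then obtain e' where "e = a + e'" by blast
    then show ?thesis
      using lin by (simp add: lookup_tr trace_exp_add lookup_single_mult_add p_inverse_linear_def)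
  next
    case False
    then have "trace_exp p e \<noteq> smult_exp p a + q" for q
      using trace_exp_eq_add_imp_dvd[OF \<open>0 < p\<close>] by blast
    with False show ?thesis
      by (simp add: lookup_tr lookup_single_mult_not_dvd p_inverse_linear_zero[OF lin])
  qed
qed

lemma p_inverse_linear_frob_trace:
  fixes \<pi> :: "'k::comm_ring_1 \<Rightarrow> 'k"
  assumes "prime CHAR('k)" and lin: "p_inverse_linear CHAR('k) \<pi>"
  shows "p_inverse_linear CHAR('k) (frob_trace CHAR('k) \<pi> :: ('n::finite, 'k) mpoly \<Rightarrow> _)"
proof -
  let ?p = "CHAR('k)" and ?tr = "frob_trace CHAR('k) \<pi> :: ('n, 'k) mpoly \<Rightarrow> _"
  have "0 < ?p" using assms(1) prime_gt_0_nat by blast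
  have add: "?tr (a + b) = ?tr a + ?tr b" for a b
    using \<open>0 < ?p\<close> lin by (rule frob_trace_add)
  have "?tr (w ^ ?p * y) = w * ?tr y" for w y
  proof -
    let ?s = "\<lambda>a. Poly_Mapping.single a (Poly_Mapping.lookup w a)"
    have "w ^ ?p = (\<Sum>a\<in>Poly_Mapping.keys w. ?s a) ^ ?p"
      by (subst poly_mapping_sum_single[of w]) (rule refl)
    also have "\<dots> = (\<Sum>a\<in>Poly_Mapping.keys w. ?s a ^ ?p)"
      using assms(1) by (intro freshmans_dream_sum) (simp_all add: CHAR_mpoly)
    finally have "?tr (w ^ ?p * y) = ?tr (\<Sum>a\<in>Poly_Mapping.keys w. ?s a ^ ?p * y)"
      by (simp add: sum_distrib_right)
    also have "\<dots> = (\<Sum>a\<in>Poly_Mapping.keys w. ?tr (?s a ^ ?p * y))"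
      using frob_trace_zero[of ?p \<pi>, OF \<open>0 < ?p\<close> p_inverse_linear_zero[OF lin]] add
      by (rule sum_comp_morphism[of ?tr, symmetric, unfolded comp_def])
    also have "\<dots> = (\<Sum>a\<in>Poly_Mapping.keys w. ?s a * ?tr y)"
      by (simp add: single_power frob_trace_single_mult[OF \<open>0 < ?p\<close> lin])
    also have "\<dots> = w * ?tr y"
      by (subst (2) poly_mapping_sum_single[of w]) (simp add: sum_distrib_right)
    finally show ?thesis .
  qed
  with add show ?thesis by (simp add: p_inverse_linear_def)
qed

locale frobenius_trace_splitting = monomial_ordering le
  for le :: "('n::finite \<Rightarrow>\<^sub>0 nat) \<Rightarrow> ('n \<Rightarrow>\<^sub>0 nat) \<Rightarrow> bool" +
  fixes p :: nat and \<pi> :: "'k::field \<Rightarrow> 'k" and g :: "('n, 'k) mpoly"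
  assumes char_eq: "CHAR('k) = p" and prime_p: "prime p"
    and p_inverse_linear_\<pi>: "p_inverse_linear p \<pi>" and \<pi>_one: "\<pi> 1 = 1"
    and g_monic: "lead_coeff le g = 1" and g_lead_exp: "lead_exp le g = ones"
begin

definition splitting :: "('n, 'k) mpoly \<Rightarrow> ('n, 'k) mpoly" where
  "splitting h = frob_trace p \<pi> (g ^ (p - 1) * h)"

lemma p_pos: "0 < p"
  using prime_p prime_gt_0_nat by blast

lemma ord_trace_exp_cancel: "le (trace_exp p a) (trace_exp p b) \<Longrightarrow> le a b"
proof (rule ccontr)
  assume "le (trace_exp p a) (trace_exp p b)" "\<not> le a b"
  moreover from this have "le (trace_exp p b) (trace_exp p a)"
    unfolding trace_exp_def using ord_total ord_add_left ord_smult_exp_mono by blast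
  ultimately show False
    using ord_antisym inj_trace_exp[OF p_pos] ord_refl by (metis injD)
qed

lemma lead_frob_trace:
  assumes "lead_coeff le y = 1" "lead_exp le y = trace_exp p e"
  shows "lead_coeff le (frob_trace p \<pi> y) = 1" "lead_exp le (frob_trace p \<pi> y) = e"
proof -
  note lookup_tr = lookup_frob_trace[of p \<pi>, OF p_pos p_inverse_linear_zero[OF p_inverse_linear_\<pi>]]
  have "y \<noteq> 0" using assms(1) by auto
  have "Poly_Mapping.lookup (frob_trace p \<pi> y) e = 1"
    using assms \<pi>_one by (simp add: lookup_tr lead_coeff_def)
  moreover have "le m e" if "m \<in> Poly_Mapping.keys (frob_trace p \<pi> y)" for m
  proof -
    have "trace_exp p m \<in> Poly_Mapping.keys y"
      using that p_inverse_linear_zero[OF p_inverse_linear_\<pi>] by (auto simp: in_keys_iff lookup_tr)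
    then show ?thesis
      using lead_exp_greatest(2)[OF \<open>y \<noteq> 0\<close>] assms(2) ord_trace_exp_cancel by auto
  qed
  ultimately have "lead_exp le (frob_trace p \<pi> y) = e"
    by (intro lead_exp_eqI) (simp_all add: in_keys_iff)
  with \<open>Poly_Mapping.lookup (frob_trace p \<pi> y) e = 1\<close>
  show "lead_coeff le (frob_trace p \<pi> y) = 1" "lead_exp le (frob_trace p \<pi> y) = e"
    by (simp_all add: lead_coeff_def)
qed

lemma p_inverse_linear_splitting: "p_inverse_linear p splitting"
  unfolding splitting_def
  using p_inverse_linear_frob_trace[of \<pi>, unfolded char_eq, OF prime_p p_inverse_linear_\<pi>]
  by (rule p_inverse_linear_mult_left)

lemma lead_splitting:
  assumes "lead_coeff le h = 1" "lead_exp le h = smult_exp p e"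
  shows "lead_coeff le (splitting h) = 1" "lead_exp le (splitting h) = e"
proof -
  have "g \<noteq> 0" "h \<noteq> 0" using g_monic assms(1) by auto
  then have "lead_coeff le (g ^ (p - 1)) = 1" by (simp add: lead_coeff_power g_monic)
  then have "g ^ (p - 1) \<noteq> 0" by auto
  have "smult_exp (p - 1) ones + smult_exp p e = trace_exp p e"
    by (simp add: trace_exp_def)
  then have "lead_coeff le (g ^ (p - 1) * h) = 1" "lead_exp le (g ^ (p - 1) * h) = trace_exp p e"
    using \<open>g \<noteq> 0\<close> \<open>h \<noteq> 0\<close> \<open>g ^ (p - 1) \<noteq> 0\<close> assms g_monic g_lead_exp
    by (simp_all add: lead_coeff_mult lead_coeff_power)
  then show "lead_coeff le (splitting h) = 1" "lead_exp le (splitting h) = e"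
    unfolding splitting_def by (rule lead_frob_trace)+
qed

lemma splitting_one: "splitting 1 = 1"
proof -
  have "lead_coeff le (1 :: ('n, 'k) mpoly) = 1" "lead_exp le (1 :: ('n, 'k) mpoly) = smult_exp p 0"
    by simp_all
  then show ?thesis
    using lead_splitting monic_lead_exp_zero by blast
qed

lemma splitting_principal: "f dvd g \<Longrightarrow> splitting ` ideal_gen {f} \<subseteq> ideal_gen {f}"
  unfolding splitting_def
  using p_inverse_linear_frob_trace[of \<pi>, unfolded char_eq, OF prime_p p_inverse_linear_\<pi>] p_pos
  by (rule p_inverse_linear_mult_left_principal) (rule dvd_power_same)

lemma compatible_ideal_sqfree_part_lead:
  assumes compat: "compatible_ideal splitting I" and "h \<in> I" "h \<noteq> 0"
  shows "\<exists>h'\<in>I. h' \<noteq> 0 \<and> lead_exp le h' = sqfree_part (lead_exp le h)"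
proof -
  have I: "is_ideal I" "splitting ` I \<subseteq> I" using compat by (simp_all add: compatible_ideal_def)
  have "1 < p" using prime_p prime_gt_1_nat by blast
  moreover have "d + a \<in> lead_exp le ` (I - {0})" if a: "a \<in> lead_exp le ` (I - {0})" for a d
  proof -
    obtain u where u: "u \<in> I" "u \<noteq> 0" "a = lead_exp le u" using a by blast
    then have "Poly_Mapping.single d 1 * u \<in> I - {0}"
      using I(1) ideal_mult_left by (simp add: mult_neq_zero)
    moreover have "lead_exp le (Poly_Mapping.single d 1 * u) = d + a"
      using u by (simp add: lead_coeff_mult lead_exp_single)
    ultimately show ?thesis by (intro image_eqI[of _ _ "Poly_Mapping.single d 1 * u"]) auto
  qed
  moreover have "e \<in> lead_exp le ` (I - {0})" if e: "smult_exp p e \<in> lead_exp le ` (I - {0})" for e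
  proof -
    from e obtain u where "u \<in> I - {0}" "smult_exp p e = lead_exp le u" by (rule imageE)
    then have u: "u \<in> I" "u \<noteq> 0" "lead_exp le u = smult_exp p e" by simp_all
    define u1 where "u1 = Poly_Mapping.single 0 (1 / lead_coeff le u) * u"
    have "u1 \<in> I" unfolding u1_def using u(1) I(1) ideal_mult_left by blast
    moreover have "lead_coeff le u1 = 1" "lead_exp le u1 = smult_exp p e"
      using u(2,3) by (simp_all add: u1_def lead_coeff_mult lead_coeff_single lead_exp_single)
    then have "lead_coeff le (splitting u1) = 1" "lead_exp le (splitting u1) = e"
      by (rule lead_splitting)+
    ultimately have "splitting u1 \<in> I - {0}" using I(2) by auto
    with \<open>lead_exp le (splitting u1) = e\<close> show ?thesis by (intro image_eqI[of _ _ "splitting u1"]) auto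
  qed
  moreover have "lead_exp le h \<in> lead_exp le ` (I - {0})" using assms(2,3) by blast
  ultimately have "sqfree_part (lead_exp le h) \<in> lead_exp le ` (I - {0})" by (rule sqfree_part_mem)
  then obtain h' where "h' \<in> I - {0}" "sqfree_part (lead_exp le h) = lead_exp le h'" by (rule imageE)
  then show ?thesis by auto
qed

end

theorem proposition2p1:
  fixes le :: "('n::finite \<Rightarrow>\<^sub>0 nat) \<Rightarrow> ('n \<Rightarrow>\<^sub>0 nat) \<Rightarrow> bool"
    and f :: "('n, 'k::field) mpoly"
    and I :: "('n, 'k) mpoly set"
  assumes "CHAR('k) > 0"
    and "monomial_order le"
    and "f \<noteq> 0"
    and "squarefree_exp (lead_exp le f)"
    and "I \<in> C_family f"
  shows "(\<exists>G. (\<forall>g\<in>G. squarefree_monomial g) \<and> initial_ideal le I = ideal_gen G) \<and> is_radical I"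
proof -
  have "prime CHAR('k)" using assms(1) by (rule prime_CHAR_semidom)
  then obtain \<pi> :: "'k \<Rightarrow> 'k" where \<pi>: "p_inverse_linear CHAR('k) \<pi>" "\<pi> 1 = 1"
    using ex_p_inverse_linear_one by blast
  obtain g where g: "f dvd g" "lead_coeff le g = 1" "lead_exp le g = ones"
    using ex_monic_multiple_lead_ones assms(2-4) by blast
  interpret frobenius_trace_splitting le "CHAR('k)" \<pi> g
    by unfold_locales (use assms(2) \<pi> g \<open>prime CHAR('k)\<close> in simp_all)
  have compat: "compatible_ideal splitting I"
    using p_inverse_linear_splitting p_pos splitting_principal[OF \<open>f dvd g\<close>] assms(5)
    by (rule C_family_compatible)
  have "\<exists>G. (\<forall>g\<in>G. squarefree_monomial g) \<and> initial_ideal le I = ideal_gen G"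
    by (rule initial_ideal_squarefree_generated) (rule compatible_ideal_sqfree_part_lead[OF compat])
  moreover have "is_radical I"
    using p_inverse_linear_splitting splitting_one prime_gt_1_nat[OF prime_p] compat
    by (rule compatible_ideal_radical)
  ultimately show ?thesis by (rule conjI)
qed

end
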